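(* Let $\mathcal M_1=((X_1,\mathcal N_1),\mathcal I,V_1)$ and $\mathcal M_2=((X_2,\mathcal N_2),\mathcal I,V_2)$ be neighbourhood models over the same index space and $(Z_{\mathcal N},Z_1,Z_2)$ a path preserving bisimulation between them. If $x_1\,Z_{\mathcal N}\,x_2$, then for every SLCS formula $\varphi$: $\mathcal M_1,x_1\models\varphi$ if and only if $\mathcal M_2,x_2\models\varphi$.
   Context: A filter on a set $X$ is a family $F\subseteq\mathcal P(X)$ closed under finite intersections and supersets, with $\emptyset\notin F$. A neighbourhood space $(X,\mathcal N)$ assigns to each $x\in X$ a filter $\mathcal N(x)$ on $X$ such that $x\in N$ for all $N\in\mathcal N(x)$; elements of $\mathcal N(x)$ are neighbourhoods of $x$. The closure of $A\subseteq X$ is $\mathcal C(A)=\{x\in X\mid \forall N\in\mathcal N(x): A\cap N\neq\emptyset\}$. Subsets $U,V$ are semi-separated if $\mathcal C(U)\cap V=U\cap\mathcal C(V)=\emptyset$; a set is connected if it is not the union of two non-empty semi-separated sets. A function $f:X_1\to X_2$ between neighbourhood spaces is continuous if for every $x\in X_1$ and every $N_2\in\mathcal N_2(f(x))$ we have $f^{-1}[N_2]\in\mathcal N_1(x)$. An index space $\mathcal I=(I,\mathcal N_I,\le,0)$ is a connected neighbourhood space $(I,\mathcal N_I)$ with a linear order $\le$ whose least element is $0$. A path on a neighbourhood space $X$ is a continuous map $p:I\to X$; we write $p:x\rightsquigarrow\infty$ if $p(0)=x$. A neighbourhood model $\mathcal M=((X,\mathcal N),\mathcal I,V)$ consists of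 a neighbourhood space, an index space and a valuation $V:X\to\mathcal P(\mathsf{P})$ for a fixed countable set $\mathsf P$ of propositional atoms; paths on $\mathcal M$ are paths with respect to $\mathcal I$. SLCS formulas: $\varphi::=a\mid\top\mid\neg\varphi\mid\varphi\wedge\varphi\mid\mathcal N\varphi\mid\varphi\,\mathcal R\,\varphi\mid\varphi\,\mathcal P\,\varphi$ with $a\in\mathsf P$. Semantics: $\mathcal M,x\models a$ iff $a\in V(x)$; Booleans as usual; $\mathcal M,x\models\mathcal N\varphi$ iff $x\in\mathcal C(\{y\mid\mathcal M,y\models\varphi\})$; $\mathcal M,x\models\varphi\,\mathcal R\,\psi$ iff there are a path $p$ and $n\in I$ with $p(n)=x$, $\mathcal M,p(0)\models\psi$ and $\mathcal M,p(i)\models\varphi$ for all $0<i\le n$; $\mathcal M,x\models\varphi\,\mathcal P\,\psi$ iff there are a path $p$ with $p(0)=x$ and $n\in I$ with $\mathcal M,p(n)\models\psi$ and $\mathcal M,p(i)\models\varphi$ for all $0\le i<n$. A relation $Z\subseteq X_1\times X_2$ between neighbourhood models satisfies the neighbourhood bisimulation conditions at a pair $x_1\,Z\,x_2$ if: (atomic) $V_1(x_1)=V_2(x_2)$; (forth) for every $N_2\in\mathcal N_2(x_2)$ there is $N_1\in\mathcal N_1(x_1)$ such that every $y_1\in N_1$ has some $y_2\in N_2$ with $y_1Zy_2$; (back) for every $N_1\in\mathcal N_1(x_1)$ there is $N_2\in\mathcal N_2(x_2)$ such that every $y_2\in N_2$ has some $y_1\in N_1$ with $y_1Zy_2$. $Z$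 is a neighbourhood bisimulation if these hold at every related pair. Path preserving bisimulation: let $\mathcal M_1,\mathcal M_2$ be neighbourhood models over the same index space $\mathcal I$, with $\mathcal P_1,\mathcal P_2$ their sets of paths. A triple $(Z_{\mathcal N},Z_1,Z_2)$ with $\emptyset\neq Z_{\mathcal N}\subseteq X_1\times X_2$, $Z_1\subseteq(\mathcal P_1\times I)\times(\mathcal P_2\times I)$, $Z_2\subseteq(\mathcal P_2\times I)\times(\mathcal P_1\times I)$ is a path preserving bisimulation if for all $x_1,x_2$, paths $p,q$ and indices: (1) $Z_{\mathcal N}$ is a neighbourhood bisimulation; (2) if $x_1Z_{\mathcal N}x_2$, $p:x_1\rightsquigarrow\infty$, $n\neq0$, then there are $q:x_2\rightsquigarrow\infty$ and $m$ with $p(n)Z_{\mathcal N}q(m)$ and $(p,n)Z_1(q,m)$; (3) if $x_1Z_{\mathcal N}x_2$, $p$ a path with $p(n)=x_1$, $n\neq0$, then there are a path $q$ and $m$ with $q(m)=x_2$, $p(0)Z_{\mathcal N}q(0)$ and $(p,n)Z_1(q,m)$; (4) if $(p,n)Z_1(q,m)$ and $0<k_q<m$, then there is $k_p$ with $0<k_p<n$ and $p(k_p)Z_{\mathcal N}q(k_q)$; (5) if $x_1Z_{\mathcal N}x_2$, $q:x_2\rightsquigarrow\infty$, $m\neq0$, then there are $p:x_1\rightsquigarrow\infty$ and $n$ with $p(n)Z_{\mathcal N}q(m)$ and $(q,m)Z_2(p,n)$; (6) if $x_1Z_{\mathcal N}x_2$, $q$ a path with $q(m)=x_2$, $m\neq0$,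 then there are a path $p$ and $n$ with $p(n)=x_1$, $p(0)Z_{\mathcal N}q(0)$ and $(q,m)Z_2(p,n)$; (7) if $(q,m)Z_2(p,n)$ and $0<k_p<n$, then there is $k_q$ with $0<k_q<m$ and $p(k_p)Z_{\mathcal N}q(k_q)$. *)

theory Defs
  imports Main "HOL-Library.Countable"
begin

text \<open>Carriers are whole types: X = UNIV :: 'a, I = UNIV :: 'i.\<close>

definition is_filter :: "'a set set \<Rightarrow> bool" where
  "is_filter F \<longleftrightarrow> UNIV \<in> F \<and> (\<forall>A\<in>F. \<forall>B\<in>F. A \<inter> B \<in> F)
     \<and> (\<forall>A\<in>F. \<forall>B. A \<subseteq> B \<longrightarrow> B \<in> F) \<and> {} \<notin> F"

definition nbhd_space :: "('a \<Rightarrow> 'a set set) \<Rightarrow> bool" where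
  "nbhd_space N \<longleftrightarrow> (\<forall>x. is_filter (N x) \<and> (\<forall>M\<in>N x. x \<in> M))"

definition ncl :: "('a \<Rightarrow> 'a set set) \<Rightarrow> 'a set \<Rightarrow> 'a set" where
  "ncl N A = {x. \<forall>M\<in>N x. A \<inter> M \<noteq> {}}"

definition semi_separated :: "('a \<Rightarrow> 'a set set) \<Rightarrow> 'a set \<Rightarrow> 'a set \<Rightarrow> bool" where
  "semi_separated N U V \<longleftrightarrow> ncl N U \<inter> V = {} \<and> U \<inter> ncl N V = {}"

definition nconnected :: "('a \<Rightarrow> 'a set set) \<Rightarrow> 'a set \<Rightarrow> bool" where
  "nconnected N S \<longleftrightarrow> \<not> (\<exists>U V. U \<noteq> {} \<and> V \<noteq> {} \<and> S = U \<union> V \<and> semi_separated N U V)"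

definition ncontinuous :: "('a \<Rightarrow> 'a set set) \<Rightarrow> ('b \<Rightarrow> 'b set set) \<Rightarrow> ('a \<Rightarrow> 'b) \<Rightarrow> bool" where
  "ncontinuous N1 N2 f \<longleftrightarrow> (\<forall>x. \<forall>M\<in>N2 (f x). f -` M \<in> N1 x)"

definition index_space :: "('i \<Rightarrow> 'i set set) \<Rightarrow> ('i \<Rightarrow> 'i \<Rightarrow> bool) \<Rightarrow> 'i \<Rightarrow> bool" where
  "index_space NI le z \<longleftrightarrow> nbhd_space NI \<and> nconnected NI UNIV
     \<and> (\<forall>i. le i i) \<and> (\<forall>i j k. le i j \<longrightarrow> le j k \<longrightarrow> le i k)
     \<and> (\<forall>i j. le i j \<longrightarrow> le j i \<longrightarrow> i = j) \<and> (\<forall>i j. le i j \<or> le j i)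
     \<and> (\<forall>i. le z i)"

definition lt :: "('i \<Rightarrow> 'i \<Rightarrow> bool) \<Rightarrow> 'i \<Rightarrow> 'i \<Rightarrow> bool" where
  "lt le i j \<longleftrightarrow> le i j \<and> i \<noteq> j"

definition paths :: "('i \<Rightarrow> 'i set set) \<Rightarrow> ('a \<Rightarrow> 'a set set) \<Rightarrow> ('i \<Rightarrow> 'a) set" where
  "paths NI N = {p. ncontinuous NI N p}"

datatype 'p form = Atom 'p | Top | Neg "'p form" | And "'p form" "'p form"
  | Near "'p form" | Reach "'p form" "'p form" | Pass "'p form" "'p form"

fun sat :: "('a \<Rightarrow> 'a set set) \<Rightarrow> ('i \<Rightarrow> 'i set set) \<Rightarrow> ('i \<Rightarrow> 'i \<Rightarrow> bool) \<Rightarrow> 'i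
             \<Rightarrow> ('a \<Rightarrow> 'p set) \<Rightarrow> 'a \<Rightarrow> 'p form \<Rightarrow> bool" where
  "sat N NI le z V x (Atom a) = (a \<in> V x)"
| "sat N NI le z V x Top = True"
| "sat N NI le z V x (Neg f) = (\<not> sat N NI le z V x f)"
| "sat N NI le z V x (And f g) = (sat N NI le z V x f \<and> sat N NI le z V x g)"
| "sat N NI le z V x (Near f) = (x \<in> ncl N {y. sat N NI le z V y f})"
| "sat N NI le z V x (Reach f g) = (\<exists>p\<in>paths NI N. \<exists>n. p n = x \<and> sat N NI le z V (p z) g
      \<and> (\<forall>i. lt le z i \<and> le i n \<longrightarrow> sat N NI le z V (p i) f))"
| "sat N NI le z V x (Pass f g) = (\<exists>p\<in>paths NI N. p z = x \<and> (\<exists>n. sat N NI le z V (p n) g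
      \<and> (\<forall>i. le z i \<and> lt le i n \<longrightarrow> sat N NI le z V (p i) f)))"

definition nbhd_bisim_at :: "('a \<Rightarrow> 'a set set) \<Rightarrow> ('a \<Rightarrow> 'p set) \<Rightarrow> ('b \<Rightarrow> 'b set set)
   \<Rightarrow> ('b \<Rightarrow> 'p set) \<Rightarrow> ('a \<times> 'b) set \<Rightarrow> 'a \<Rightarrow> 'b \<Rightarrow> bool" where
  "nbhd_bisim_at N1 V1 N2 V2 Z x1 x2 \<longleftrightarrow> V1 x1 = V2 x2
     \<and> (\<forall>M2\<in>N2 x2. \<exists>M1\<in>N1 x1. \<forall>y1\<in>M1. \<exists>y2\<in>M2. (y1, y2) \<in> Z)
     \<and> (\<forall>M1\<in>N1 x1. \<exists>M2\<in>N2 x2. \<forall>y2\<in>M2. \<exists>y1\<in>M1. (y1, y2) \<in> Z)"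

definition nbhd_bisim :: "('a \<Rightarrow> 'a set set) \<Rightarrow> ('a \<Rightarrow> 'p set) \<Rightarrow> ('b \<Rightarrow> 'b set set)
   \<Rightarrow> ('b \<Rightarrow> 'p set) \<Rightarrow> ('a \<times> 'b) set \<Rightarrow> bool" where
  "nbhd_bisim N1 V1 N2 V2 Z \<longleftrightarrow> (\<forall>(x1, x2)\<in>Z. nbhd_bisim_at N1 V1 N2 V2 Z x1 x2)"

definition path_pres_bisim ::
  "('a \<Rightarrow> 'a set set) \<Rightarrow> ('a \<Rightarrow> 'p set) \<Rightarrow> ('b \<Rightarrow> 'b set set) \<Rightarrow> ('b \<Rightarrow> 'p set)
   \<Rightarrow> ('i \<Rightarrow> 'i set set) \<Rightarrow> ('i \<Rightarrow> 'i \<Rightarrow> bool) \<Rightarrow> 'i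
   \<Rightarrow> ('a \<times> 'b) set \<Rightarrow> ((('i \<Rightarrow> 'a) \<times> 'i) \<times> (('i \<Rightarrow> 'b) \<times> 'i)) set
   \<Rightarrow> ((('i \<Rightarrow> 'b) \<times> 'i) \<times> (('i \<Rightarrow> 'a) \<times> 'i)) set \<Rightarrow> bool" where
  "path_pres_bisim N1 V1 N2 V2 NI le z ZN Z1 Z2 \<longleftrightarrow>
     ZN \<noteq> {}
   \<and> Z1 \<subseteq> (paths NI N1 \<times> UNIV) \<times> (paths NI N2 \<times> UNIV)
   \<and> Z2 \<subseteq> (paths NI N2 \<times> UNIV) \<times> (paths NI N1 \<times> UNIV)
   \<comment> \<open>(1)\<close>
   \<and> nbhd_bisim N1 V1 N2 V2 ZN
   \<comment> \<open>(2)\<close>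
   \<and> (\<forall>x1 x2 p n. (x1, x2) \<in> ZN \<and> p \<in> paths NI N1 \<and> p z = x1 \<and> n \<noteq> z \<longrightarrow>
        (\<exists>q\<in>paths NI N2. \<exists>m. q z = x2 \<and> (p n, q m) \<in> ZN \<and> ((p, n), (q, m)) \<in> Z1))
   \<comment> \<open>(3)\<close>
   \<and> (\<forall>x1 x2 p n. (x1, x2) \<in> ZN \<and> p \<in> paths NI N1 \<and> p n = x1 \<and> n \<noteq> z \<longrightarrow>
        (\<exists>q\<in>paths NI N2. \<exists>m. q m = x2 \<and> (p z, q z) \<in> ZN \<and> ((p, n), (q, m)) \<in> Z1))
   \<comment> \<open>(4)\<close>
   \<and> (\<forall>p n q m kq. ((p, n), (q, m)) \<in> Z1 \<and> lt le z kq \<and> lt le kq m \<longrightarrow>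
        (\<exists>kp. lt le z kp \<and> lt le kp n \<and> (p kp, q kq) \<in> ZN))
   \<comment> \<open>(5)\<close>
   \<and> (\<forall>x1 x2 q m. (x1, x2) \<in> ZN \<and> q \<in> paths NI N2 \<and> q z = x2 \<and> m \<noteq> z \<longrightarrow>
        (\<exists>p\<in>paths NI N1. \<exists>n. p z = x1 \<and> (p n, q m) \<in> ZN \<and> ((q, m), (p, n)) \<in> Z2))
   \<comment> \<open>(6)\<close>
   \<and> (\<forall>x1 x2 q m. (x1, x2) \<in> ZN \<and> q \<in> paths NI N2 \<and> q m = x2 \<and> m \<noteq> z \<longrightarrow>
        (\<exists>p\<in>paths NI N1. \<exists>n. p n = x1 \<and> (p z, q z) \<in> ZN \<and> ((q, m), (p, n)) \<in> Z2))
   \<comment> \<open>(7)\<close>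
   \<and> (\<forall>q m p n kp. ((q, m), (p, n)) \<in> Z2 \<and> lt le z kp \<and> lt le kp n \<longrightarrow>
        (\<exists>kq. lt le z kq \<and> lt le kq m \<and> (p kp, q kq) \<in> ZN))"

end

theory Submission
  imports Defs
begin

text \<open>Near is carried across by the forth and back conditions of
  the neighbourhood bisimulation. A path witnessing Reach (Pass) is matched by the path given
  by clause (3) (clause (2)); clause (4) sends every interior index of the new path to an
  interior index of the old one, where the left argument holds, and the remaining endpoint is
  the related pair we started from. A witness whose final index is 0 is matched by a constant
  path. Clauses (5)--(7) are clauses (2)--(4) for the converse relations, so the backward
  implications are the forward ones applied to the converse bisimulation.\<close>

definition reach ::
  "('i \<Rightarrow> 'i set set) \<Rightarrow> ('a \<Rightarrow> 'a set set) \<Rightarrow> ('i \<Rightarrow> 'i \<Rightarrow> bool) \<Rightarrow> 'i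
   \<Rightarrow> ('a \<Rightarrow> bool) \<Rightarrow> ('a \<Rightarrow> bool) \<Rightarrow> 'a \<Rightarrow> bool" where
  "reach NI N le z F G x \<longleftrightarrow>
     (\<exists>p\<in>paths NI N. \<exists>n. p n = x \<and> G (p z) \<and> (\<forall>i. lt le z i \<and> le i n \<longrightarrow> F (p i)))"

definition pass ::
  "('i \<Rightarrow> 'i set set) \<Rightarrow> ('a \<Rightarrow> 'a set set) \<Rightarrow> ('i \<Rightarrow> 'i \<Rightarrow> bool) \<Rightarrow> 'i
   \<Rightarrow> ('a \<Rightarrow> bool) \<Rightarrow> ('a \<Rightarrow> bool) \<Rightarrow> 'a \<Rightarrow> bool" where
  "pass NI N le z F G x \<longleftrightarrow>
     (\<exists>p\<in>paths NI N. p z = x \<and> (\<exists>n. G (p n) \<and> (\<forall>i. le z i \<and> lt le i n \<longrightarrow> F (p i))))"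

lemma sat_Reach:
  "sat N NI le z V x (Reach f g) \<longleftrightarrow>
     reach NI N le z (\<lambda>y. sat N NI le z V y f) (\<lambda>y. sat N NI le z V y g) x"
  by (simp add: reach_def)

lemma sat_Pass:
  "sat N NI le z V x (Pass f g) \<longleftrightarrow>
     pass NI N le z (\<lambda>y. sat N NI le z V y f) (\<lambda>y. sat N NI le z V y g) x"
  by (simp add: pass_def)

lemma const_in_paths:
  assumes "nbhd_space NI" and "nbhd_space N"
  shows "(\<lambda>_. c) \<in> paths NI N"
  using assms unfolding paths_def ncontinuous_def nbhd_space_def is_filter_def by auto

lemma index_space_nbhd_space: "index_space NI le z \<Longrightarrow> nbhd_space NI"
  unfolding index_space_def by blast

lemma index_space_le_refl: "index_space NI le z \<Longrightarrow> le i i"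
  unfolding index_space_def by blast

lemma index_space_le_zero_iff: "index_space NI le z \<Longrightarrow> le i z \<longleftrightarrow> i = z"
  unfolding index_space_def by blast

lemma index_space_lt_zero_iff:
  assumes "index_space NI le z"
  shows "lt le z i \<longleftrightarrow> i \<noteq> z" and "\<not> lt le i z"
  using assms unfolding index_space_def lt_def by auto

lemma reach_const:
  assumes "index_space NI le z" and "nbhd_space N" and "G x"
  shows "reach NI N le z F G x"
proof -
  have "(\<lambda>_. x) \<in> paths NI N"
    by (rule const_in_paths[OF index_space_nbhd_space[OF assms(1)] assms(2)])
  moreover have "\<not> (lt le z i \<and> le i z)" for i
    using index_space_lt_zero_iff(1)[OF assms(1)] index_space_le_zero_iff[OF assms(1)] by blast
  ultimately show ?thesis
    unfolding reach_def using assms(3) by (intro bexI[of _ "\<lambda>_. x"] exI[of _ z]) auto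
qed

lemma pass_const:
  assumes "index_space NI le z" and "nbhd_space N" and "G x"
  shows "pass NI N le z F G x"
proof -
  have "(\<lambda>_. x) \<in> paths NI N"
    by (rule const_in_paths[OF index_space_nbhd_space[OF assms(1)] assms(2)])
  then show ?thesis
    unfolding pass_def using assms(3) index_space_lt_zero_iff(2)[OF assms(1)]
    by (intro bexI[of _ "\<lambda>_. x"] conjI exI[of _ z]) auto
qed

lemma nbhd_bisim_valuation:
  "nbhd_bisim N1 V1 N2 V2 Z \<Longrightarrow> (x1, x2) \<in> Z \<Longrightarrow> V1 x1 = V2 x2"
  unfolding nbhd_bisim_def nbhd_bisim_at_def by fast

lemma nbhd_bisim_forth:
  assumes "nbhd_bisim N1 V1 N2 V2 Z" and "(x1, x2) \<in> Z" and "M2 \<in> N2 x2"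
  obtains M1 where "M1 \<in> N1 x1" and "\<forall>y1\<in>M1. \<exists>y2\<in>M2. (y1, y2) \<in> Z"
  using assms unfolding nbhd_bisim_def nbhd_bisim_at_def by fast

lemma nbhd_bisim_converse:
  "nbhd_bisim N1 V1 N2 V2 Z \<Longrightarrow> nbhd_bisim N2 V2 N1 V1 (Z\<inverse>)"
  unfolding nbhd_bisim_def nbhd_bisim_at_def by fastforce

lemma ncl_transfer:
  assumes "nbhd_bisim N1 V1 N2 V2 Z" and "(x1, x2) \<in> Z"
    and "\<And>y1 y2. (y1, y2) \<in> Z \<Longrightarrow> y1 \<in> A1 \<Longrightarrow> y2 \<in> A2"
    and "x1 \<in> ncl N1 A1"
  shows "x2 \<in> ncl N2 A2"
  unfolding ncl_def
proof (intro CollectI ballI)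
  fix M2 assume "M2 \<in> N2 x2"
  then obtain M1 where "M1 \<in> N1 x1" and forth: "\<forall>y1\<in>M1. \<exists>y2\<in>M2. (y1, y2) \<in> Z"
    using nbhd_bisim_forth[OF assms(1,2)] by blast
  then obtain y1 where "y1 \<in> A1" "y1 \<in> M1"
    using assms(4) unfolding ncl_def by blast
  with forth assms(3) show "A2 \<inter> M2 \<noteq> {}" by blast
qed

lemma path_pres_bisimD:
  assumes "path_pres_bisim N1 V1 N2 V2 NI le z ZN Z1 Z2"
  shows "ZN \<noteq> {}"
    and "Z1 \<subseteq> (paths NI N1 \<times> UNIV) \<times> (paths NI N2 \<times> UNIV)"
    and "Z2 \<subseteq> (paths NI N2 \<times> UNIV) \<times> (paths NI N1 \<times> UNIV)"
    and path_pres_bisim_nbhd_bisim: "nbhd_bisim N1 V1 N2 V2 ZN"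
    and path_pres_bisim_forth_from:
      "\<lbrakk>(x1, x2) \<in> ZN; p \<in> paths NI N1; p z = x1; n \<noteq> z\<rbrakk> \<Longrightarrow>
       \<exists>q\<in>paths NI N2. \<exists>m. q z = x2 \<and> (p n, q m) \<in> ZN \<and> ((p, n), (q, m)) \<in> Z1"
    and path_pres_bisim_forth_to:
      "\<lbrakk>(x1, x2) \<in> ZN; p \<in> paths NI N1; p n = x1; n \<noteq> z\<rbrakk> \<Longrightarrow>
       \<exists>q\<in>paths NI N2. \<exists>m. q m = x2 \<and> (p z, q z) \<in> ZN \<and> ((p, n), (q, m)) \<in> Z1"
    and path_pres_bisim_forth_interior:
      "\<lbrakk>((p, n), (q, m)) \<in> Z1; lt le z kq; lt le kq m\<rbrakk> \<Longrightarrow>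
       \<exists>kp. lt le z kp \<and> lt le kp n \<and> (p kp, q kq) \<in> ZN"
    and
      "\<lbrakk>(x1, x2) \<in> ZN; q \<in> paths NI N2; q z = x2; m \<noteq> z\<rbrakk> \<Longrightarrow>
       \<exists>p\<in>paths NI N1. \<exists>n. p z = x1 \<and> (p n, q m) \<in> ZN \<and> ((q, m), (p, n)) \<in> Z2"
    and
      "\<lbrakk>(x1, x2) \<in> ZN; q \<in> paths NI N2; q m = x2; m \<noteq> z\<rbrakk> \<Longrightarrow>
       \<exists>p\<in>paths NI N1. \<exists>n. p n = x1 \<and> (p z, q z) \<in> ZN \<and> ((q, m), (p, n)) \<in> Z2"
    and
      "\<lbrakk>((q, m), (p, n)) \<in> Z2; lt le z kp; lt le kp n\<rbrakk> \<Longrightarrow>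
       \<exists>kq. lt le z kq \<and> lt le kq m \<and> (p kp, q kq) \<in> ZN"
  using assms unfolding path_pres_bisim_def by (elim conjE; metis)+

lemma path_pres_bisim_converse:
  assumes B: "path_pres_bisim N1 V1 N2 V2 NI le z ZN Z1 Z2"
  shows "path_pres_bisim N2 V2 N1 V1 NI le z (ZN\<inverse>) Z2 Z1"
  unfolding path_pres_bisim_def converse_iff
  by (intro conjI allI impI; (elim conjE)?;
      (rule nbhd_bisim_converse path_pres_bisimD[OF B]; assumption?)?;
      use path_pres_bisimD[OF B] in auto)

lemma reach_transfer:
  assumes I: "index_space NI le z" and "nbhd_space N2"
    and B: "path_pres_bisim N1 V1 N2 V2 NI le z ZN Z1 Z2" and x: "(x1, x2) \<in> ZN"
    and F: "\<And>y1 y2. (y1, y2) \<in> ZN \<Longrightarrow> F1 y1 \<Longrightarrow> F2 y2"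
    and G: "\<And>y1 y2. (y1, y2) \<in> ZN \<Longrightarrow> G1 y1 \<Longrightarrow> G2 y2"
    and "reach NI N1 le z F1 G1 x1"
  shows "reach NI N2 le z F2 G2 x2"
proof -
  obtain p n where p: "p \<in> paths NI N1" "p n = x1" "G1 (p z)"
    and pF: "\<And>i. lt le z i \<Longrightarrow> le i n \<Longrightarrow> F1 (p i)"
    using assms(7) unfolding reach_def by blast
  show ?thesis
  proof (cases "n = z")
    case True
    then show ?thesis using reach_const[OF I \<open>nbhd_space N2\<close>] G x p by metis
  next
    case False
    then obtain q m where q: "q \<in> paths NI N2" "q m = x2" "(p z, q z) \<in> ZN"
      and Z1: "((p, n), (q, m)) \<in> Z1"
      using path_pres_bisim_forth_to[OF B x p(1,2) False] by blast
    have "F2 (q i)" if i: "lt le z i" "le i m" for i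
    proof (cases "i = m")
      case True
      have "lt le z n" using index_space_lt_zero_iff(1)[OF I] False by blast
      then have "F1 x1" using pF index_space_le_refl[OF I] p(2) by metis
      then show ?thesis using F x q(2) True by blast
    next
      case False
      then have "lt le i m" using i(2) by (simp add: lt_def)
      then obtain kp where "lt le z kp" "lt le kp n" "(p kp, q i) \<in> ZN"
        using path_pres_bisim_forth_interior[OF B Z1 i(1)] by blast
      then show ?thesis using F pF by (auto simp: lt_def)
    qed
    then show ?thesis unfolding reach_def using q G p(3) by blast
  qed
qed

lemma pass_transfer:
  assumes I: "index_space NI le z" and "nbhd_space N2"
    and B: "path_pres_bisim N1 V1 N2 V2 NI le z ZN Z1 Z2" and x: "(x1, x2) \<in> ZN"
    and F: "\<And>y1 y2. (y1, y2) \<in> ZN \<Longrightarrow> F1 y1 \<Longrightarrow> F2 y2"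
    and G: "\<And>y1 y2. (y1, y2) \<in> ZN \<Longrightarrow> G1 y1 \<Longrightarrow> G2 y2"
    and "pass NI N1 le z F1 G1 x1"
  shows "pass NI N2 le z F2 G2 x2"
proof -
  obtain p n where p: "p \<in> paths NI N1" "p z = x1" "G1 (p n)"
    and pF: "\<And>i. le z i \<Longrightarrow> lt le i n \<Longrightarrow> F1 (p i)"
    using assms(7) unfolding pass_def by blast
  show ?thesis
  proof (cases "n = z")
    case True
    then show ?thesis using pass_const[OF I \<open>nbhd_space N2\<close>] G x p by metis
  next
    case False
    then obtain q m where q: "q \<in> paths NI N2" "q z = x2" "(p n, q m) \<in> ZN"
      and Z1: "((p, n), (q, m)) \<in> Z1"
      using path_pres_bisim_forth_from[OF B x p(1,2) False] by blast
    have "F2 (q i)" if i: "le z i" "lt le i m" for i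
    proof (cases "i = z")
      case True
      have "lt le z n" using index_space_lt_zero_iff(1)[OF I] False by blast
      then have "F1 x1" using pF index_space_le_refl[OF I] p(2) by metis
      then show ?thesis using F x q(2) True by blast
    next
      case False
      then have "lt le z i" using index_space_lt_zero_iff(1)[OF I] by blast
      then obtain kp where "lt le z kp" "lt le kp n" "(p kp, q i) \<in> ZN"
        using path_pres_bisim_forth_interior[OF B Z1 _ i(2)] by blast
      then show ?thesis using F pF by (auto simp: lt_def)
    qed
    then show ?thesis unfolding pass_def using q G p(3) by blast
  qed
qed

lemma sat_iff_of_path_pres_bisim:
  assumes N1: "nbhd_space N1" and N2: "nbhd_space N2" and I: "index_space NI le z"
    and B: "path_pres_bisim N1 V1 N2 V2 NI le z ZN Z1 Z2"
    and "(x1, x2) \<in> ZN"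
  shows "sat N1 NI le z V1 x1 \<phi> \<longleftrightarrow> sat N2 NI le z V2 x2 \<phi>"
  using \<open>(x1, x2) \<in> ZN\<close>
proof (induction \<phi> arbitrary: x1 x2)
  note B' = path_pres_bisim_converse[OF B]
  note NB = path_pres_bisim_nbhd_bisim[OF B]
  note NB' = nbhd_bisim_converse[OF NB]
  {
    case (Atom a)
    then show ?case using nbhd_bisim_valuation[OF NB] by simp
  next
    case (Near f)
    show ?case
      unfolding sat.simps
      by (rule iffI, rule ncl_transfer[OF NB Near.prems], use Near.IH in auto,
          rule ncl_transfer[OF NB' converseI[OF Near.prems]], use Near.IH in auto)
  next
    case (Reach f g)
    show ?case
      unfolding sat_Reach
      by (rule iffI, rule reach_transfer[OF I N2 B Reach.prems], use Reach.IH in auto,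
          rule reach_transfer[OF I N1 B' converseI[OF Reach.prems]], use Reach.IH in auto)
  next
    case (Pass f g)
    show ?case
      unfolding sat_Pass
      by (rule iffI, rule pass_transfer[OF I N2 B Pass.prems], use Pass.IH in auto,
          rule pass_transfer[OF I N1 B' converseI[OF Pass.prems]], use Pass.IH in auto)
  }
qed simp_all

theorem theorem17:
  fixes N1 :: "'a \<Rightarrow> 'a set set" and V1 :: "'a \<Rightarrow> 'p::countable set"
    and N2 :: "'b \<Rightarrow> 'b set set" and V2 :: "'b \<Rightarrow> 'p set"
    and NI :: "'i \<Rightarrow> 'i set set" and le :: "'i \<Rightarrow> 'i \<Rightarrow> bool" and z :: 'i
    and ZN :: "('a \<times> 'b) set"
    and Z1 :: "((('i \<Rightarrow> 'a) \<times> 'i) \<times> (('i \<Rightarrow> 'b) \<times> 'i)) set"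
    and Z2 :: "((('i \<Rightarrow> 'b) \<times> 'i) \<times> (('i \<Rightarrow> 'a) \<times> 'i)) set"
    and \<phi> :: "'p form"
  assumes "nbhd_space N1" and "nbhd_space N2" and "index_space NI le z"
    and "path_pres_bisim N1 V1 N2 V2 NI le z ZN Z1 Z2"
    and "(x1, x2) \<in> ZN"
  shows "sat N1 NI le z V1 x1 \<phi> \<longleftrightarrow> sat N2 NI le z V2 x2 \<phi>"
  using sat_iff_of_path_pres_bisim[OF assms] .

end
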